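(* For every $\widetilde r\in\mathbb{N}$ and $r_0\in\{0,\dots,b-1\}$, \[\mathrm{Var}(\mu^{(b\widetilde r+r_0)})=\frac{b-r_0}{b}\mathrm{Var}(\mu^{(\widetilde r)})+\frac{r_0}{b}\mathrm{Var}(\mu^{(\widetilde r+1)})+r_0(b-r_0).\]
   Context: Fix an integer $b\ge2$. For $n\in\mathbb{N}$ with base-$b$ digits $n_k$, $s(n):=\sum_kn_k$. For $r,n\in\mathbb{N}$, $\Delta^{(r)}(n):=s(n+r)-s(n)$, and $\mu^{(r)}(d):=\lim_{N\to\infty}\frac1N|\{n<N:\Delta^{(r)}(n)=d\}|$ for $d\in\mathbb{Z}$; these limits exist and $\mu^{(r)}$ is a probability measure on $\mathbb{Z}$ with finite moments and mean zero. $\mathrm{Var}(\mu^{(r)})$ is its variance. *)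

theory Defs
  imports "HOL-Analysis.Analysis"
begin

text \<open>Base-b digit sum: the k-th digit of n is (n div b^k) mod b; all digits
  with index k > n vanish (b \<ge> 2), so summing over k \<le> n is the full sum.\<close>
definition digsum :: "nat \<Rightarrow> nat \<Rightarrow> int" where
  "digsum b n = (\<Sum>k\<le>n. int ((n div b ^ k) mod b))"

definition Delta :: "nat \<Rightarrow> nat \<Rightarrow> nat \<Rightarrow> int" where
  "Delta b r n = digsum b (n + r) - digsum b n"

definition mu :: "nat \<Rightarrow> nat \<Rightarrow> int \<Rightarrow> real" where
  "mu b r d = lim (\<lambda>N. real (card {n. n < N \<and> Delta b r n = d}) / real N)"

definition mean_mu :: "nat \<Rightarrow> nat \<Rightarrow> real" where
  "mean_mu b r = (\<Sum>\<^sub>\<infinity>d\<in>(UNIV::int set). real_of_int d * mu b r d)"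

definition Var_mu :: "nat \<Rightarrow> nat \<Rightarrow> real" where
  "Var_mu b r = (\<Sum>\<^sub>\<infinity>d\<in>(UNIV::int set). (real_of_int d - mean_mu b r)\<^sup>2 * mu b r d)"

end

theory Submission
  imports Defs
begin

text \<open>Split \<open>n = b m + n0\<close> at its last digit and write \<open>r = b r' + r0\<close>. If \<open>n0 + r0 < b\<close> there is no
  carry out of the last digit and \<open>Delta b r n = Delta b r' m + r0\<close>; otherwise
  \<open>Delta b r n = Delta b (r' + 1) m + r0 - b\<close>. Counting over blocks of \<open>b\<close> consecutive integers,
  \<open>mu b r\<close> is the mixture, with weights \<open>(b - r0)/b\<close> and \<open>r0/b\<close>, of \<open>mu b r'\<close> shifted by \<open>r0\<close>
  and \<open>mu b (r' + 1)\<close> shifted by \<open>r0 - b\<close>. The shifts average to zero, so the mixture stays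
  centred, and its second moment is the weighted sum of the two variances plus
  \<open>(b - r0) r0\<^sup>2/b + r0 (b - r0)\<^sup>2/b = r0 (b - r0)\<close>.

  Existence of the densities and finiteness of the moments are proved along the way, by strong
  induction on \<open>r\<close>. The base cases are \<open>r = 0\<close> (a point mass) and \<open>r = 1\<close>, where the recursion
  refers to \<open>r\<close> itself; there it pins down an explicit geometric law, whose moments are read off
  by summing the recursion.\<close>

lemma less_power_self: "b \<ge> 2 \<Longrightarrow> n < b ^ n"
  using less_exp[of n] power_mono[of 2 b n] by linarith

lemma digsum_eq_sum_lessThan:
  assumes "b \<ge> 2" "n < b ^ K"
  shows "digsum b n = (\<Sum>k<K. int (n div b ^ k mod b))"
proof -
  have vanish: "n div b ^ k mod b = 0" if "K \<le> k \<or> n < k" for k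
  proof -
    have "n < b ^ k"
    proof (cases "K \<le> k")
      case True
      then show ?thesis using assms power_increasing[of K k b] by linarith
    next
      case False
      then have "n < k" using that by simp
      then show ?thesis using less_power_self[OF assms(1), of k] by simp
    qed
    then show ?thesis by simp
  qed
  let ?M = "{..<max K (Suc n)}"
  have "digsum b n = (\<Sum>k\<in>?M. int (n div b ^ k mod b))"
    unfolding digsum_def using vanish by (intro sum.mono_neutral_left) auto
  also have "\<dots> = (\<Sum>k<K. int (n div b ^ k mod b))"
    using vanish by (intro sum.mono_neutral_right) auto
  finally show ?thesis .
qed

lemma digsum_mult_add:
  assumes "b \<ge> 2" "n0 < b"
  shows "digsum b (b * m + n0) = int n0 + digsum b m"
proof -
  have "b * m + n0 < b * (m + 1)" using assms(2) by simp
  also have "\<dots> \<le> b * b ^ m" using less_power_self[OF assms(1), of m] by (intro mult_le_mono2) simp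
  finally have "digsum b (b * m + n0) = (\<Sum>k<Suc m. int ((b * m + n0) div b ^ k mod b))"
    using assms(1) by (intro digsum_eq_sum_lessThan) auto
  also have "\<dots> = int n0 + (\<Sum>k<m. int (m div b ^ k mod b))"
    using assms by (simp only: sum.lessThan_Suc_shift) (simp add: div_mult2_eq)
  also have "\<dots> = int n0 + digsum b m"
    using digsum_eq_sum_lessThan[OF assms(1) less_power_self[OF assms(1)]] by simp
  finally show ?thesis .
qed

lemma Delta_mult_add:
  assumes "b \<ge> 2" "n0 < b" "r0 < b"
  shows "Delta b (b * r + r0) (b * m + n0) =
     (if n0 + r0 < b then Delta b r m + int r0 else Delta b (r + 1) m + int r0 - int b)"
proof (cases "n0 + r0 < b")
  case True
  have e: "b * m + n0 + (b * r + r0) = b * (m + r) + (n0 + r0)" by (simp add: algebra_simps)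
  show ?thesis unfolding Delta_def e
    using True assms digsum_mult_add[of b "n0 + r0" "m + r"] digsum_mult_add[of b n0 m]
    by simp
next
  case False
  have e: "b * m + n0 + (b * r + r0) = b * (m + (r + 1)) + (n0 + r0 - b)"
    using False by (simp add: algebra_simps)
  show ?thesis unfolding Delta_def e
    using False assms digsum_mult_add[of b "n0 + r0 - b" "m + (r + 1)"] digsum_mult_add[of b n0 m]
    by (simp add: of_nat_diff)
qed

lemma tendsto_ratio_from_multiples:
  fixes C :: "nat \<Rightarrow> nat"
  assumes "b > 0"
    and mono: "\<And>N k. C N \<le> C (N + k)" and lip: "\<And>N k. C (N + k) \<le> C N + k"
    and lim: "(\<lambda>M. real (C (b * M)) / real (b * M)) \<longlonglongrightarrow> L"
  shows "(\<lambda>N. real (C N) / real N) \<longlonglongrightarrow> L"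
proof -
  define K where "K N = b * (N div b)" for N
  have N_eq: "N = K N + N mod b" for N unfolding K_def by simp
  have lim_K: "(\<lambda>N. real (C (K N)) / real (K N)) \<longlonglongrightarrow> L"
    using filterlim_compose[OF lim filterlim_at_top_div_const_nat[OF \<open>b > 0\<close>]] by (simp add: K_def)
  have small: "(\<lambda>N. x N / real N) \<longlonglongrightarrow> 0" if "\<And>N. \<bar>x N\<bar> \<le> real b" for x
  proof (rule Lim_null_comparison)
    show "\<forall>\<^sub>F N in sequentially. norm (x N / real N) \<le> real b / real N"
      using that by (intro always_eventually allI) (simp add: abs_divide divide_right_mono)
  qed (rule lim_const_over_n)
  have "\<bar>real (N mod b)\<bar> \<le> real b" for N
    using \<open>b > 0\<close> by simp
  then have lim_mod: "(\<lambda>N. real (N mod b) / real N) \<longlonglongrightarrow> 0" by (rule small)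
  have "\<bar>real (C N) - real (C (K N))\<bar> \<le> real b" for N
  proof -
    have "C (K N) \<le> C N" "C N \<le> C (K N) + N mod b"
      using mono[of "K N" "N mod b"] lip[of "K N" "N mod b"] N_eq[of N] by simp_all
    moreover have "N mod b \<le> b" using \<open>b > 0\<close> by (simp add: less_imp_le)
    ultimately show ?thesis by linarith
  qed
  then have lim_diff: "(\<lambda>N. (real (C N) - real (C (K N))) / real N) \<longlonglongrightarrow> 0" by (rule small)
  have "\<forall>\<^sub>F N in sequentially. real (C N) / real N =
      real (C (K N)) / real (K N) * (1 - real (N mod b) / real N) + (real (C N) - real (C (K N))) / real N"
  proof (rule eventually_sequentiallyI)
    fix N assume "b \<le> N"
    then have "K N > 0" using \<open>b > 0\<close> by (simp add: K_def div_greater_zero_iff)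
    have eq: "1 - real (N mod b) / real N = real (K N) / real N"
      using \<open>b \<le> N\<close> \<open>b > 0\<close> N_eq[of N] by (simp add: field_simps flip: of_nat_add)
    show "real (C N) / real N =
      real (C (K N)) / real (K N) * (1 - real (N mod b) / real N) + (real (C N) - real (C (K N))) / real N"
      unfolding eq using \<open>K N > 0\<close> by (simp add: diff_divide_distrib)
  qed
  moreover have "(\<lambda>N. real (C (K N)) / real (K N) * (1 - real (N mod b) / real N)
      + (real (C N) - real (C (K N))) / real N) \<longlonglongrightarrow> L * (1 - 0) + 0"
    by (intro tendsto_intros lim_K lim_mod lim_diff)
  ultimately show ?thesis by (simp add: tendsto_cong)
qed

definition Delta_count :: "nat \<Rightarrow> nat \<Rightarrow> int \<Rightarrow> nat \<Rightarrow> nat" where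
  "Delta_count b r d N = card {n. n < N \<and> Delta b r n = d}"

definition Delta_freq :: "nat \<Rightarrow> nat \<Rightarrow> int \<Rightarrow> nat \<Rightarrow> real" where
  "Delta_freq b r d N = real (Delta_count b r d N) / real N"

lemma mu_eqI: "Delta_freq b r d \<longlonglongrightarrow> x \<Longrightarrow> mu b r d = x"
  unfolding mu_def Delta_freq_def Delta_count_def by (rule limI)

lemma Delta_count_eq_sum: "Delta_count b r d N = (\<Sum>n<N. of_bool (Delta b r n = d))"
  unfolding Delta_count_def by (simp add: lessThan_def Collect_conj_eq)

lemma Delta_count_mult_add:
  assumes "b \<ge> 2" "r0 < b"
  shows "Delta_count b (b * r + r0) d (b * M) =
    (b - r0) * Delta_count b r (d - int r0) M + r0 * Delta_count b (r + 1) (d - int r0 + int b) M"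
proof -
  have block: "(\<Sum>i<b. of_bool (Delta b (b * r + r0) (b * m + i) = d)) =
      (b - r0) * of_bool (Delta b r m = d - int r0) + r0 * of_bool (Delta b (r + 1) m = d - int r0 + int b)"
    for m
  proof -
    have "(\<Sum>i<b. of_bool (Delta b (b * r + r0) (b * m + i) = d)) =
        (\<Sum>i<b. if i < b - r0 then of_bool (Delta b r m = d - int r0)
                 else of_bool (Delta b (r + 1) m = d - int r0 + int b) :: nat)"
      using assms by (intro sum.cong refl) (auto simp: Delta_mult_add)
    also have "\<dots> = (b - r0) * of_bool (Delta b r m = d - int r0) + r0 * of_bool (Delta b (r + 1) m = d - int r0 + int b)"
    proof -
      have "{..<b} \<inter> {i. i < b - r0} = {..<b - r0}" "{..<b} \<inter> - {i. i < b - r0} = {b - r0..<b}"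
        by auto
      then show ?thesis using assms by (simp add: sum.If_cases)
    qed
    finally show ?thesis .
  qed
  have shift: "sum f {m * b..<m * b + b} = (\<Sum>i<b. f (b * m + i))" for f :: "nat \<Rightarrow> nat" and m
    using sum.shift_bounds_nat_ivl[of f 0 "m * b" b] by (simp add: atLeast0LessThan add.commute mult.commute)
  have "Delta_count b (b * r + r0) d (b * M) =
      (\<Sum>m<M. \<Sum>i<b. of_bool (Delta b (b * r + r0) (b * m + i) = d))"
    unfolding Delta_count_eq_sum mult.commute[of b M] sum.nat_group[where k = b, symmetric] shift ..
  also have "\<dots> = (b - r0) * Delta_count b r (d - int r0) M + r0 * Delta_count b (r + 1) (d - int r0 + int b) M"
    unfolding block Delta_count_eq_sum by (simp add: sum.distrib sum_distrib_left)
  finally show ?thesis .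
qed

lemma Delta_count_mono: "Delta_count b r d N \<le> Delta_count b r d (N + k)"
  unfolding Delta_count_def by (intro card_mono) auto

lemma Delta_count_add_le: "Delta_count b r d (N + k) \<le> Delta_count b r d N + k"
proof -
  have "{n. n < N + k \<and> Delta b r n = d} \<subseteq> {n. n < N \<and> Delta b r n = d} \<union> {N..<N + k}"
    by auto
  then have "Delta_count b r d (N + k) \<le> card ({n. n < N \<and> Delta b r n = d} \<union> {N..<N + k})"
    unfolding Delta_count_def by (intro card_mono) auto
  also have "\<dots> \<le> Delta_count b r d N + k"
    unfolding Delta_count_def using card_Un_le[of _ "{N..<N + k}"] by simp
  finally show ?thesis .
qed

lemma Delta_freq_mult_add_tendsto:
  assumes b: "b \<ge> 2" "r0 < b"
    and lim_A: "Delta_freq b r (d - int r0) \<longlonglongrightarrow> A"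
    and lim_B: "r0 > 0 \<Longrightarrow> Delta_freq b (r + 1) (d - int r0 + int b) \<longlonglongrightarrow> B"
  shows "Delta_freq b (b * r + r0) d \<longlonglongrightarrow> real (b - r0) / real b * A + real r0 / real b * B"
proof -
  have eq: "real (Delta_count b (b * r + r0) d (b * M)) / real (b * M) =
      real (b - r0) / real b * Delta_freq b r (d - int r0) M
    + real r0 / real b * Delta_freq b (r + 1) (d - int r0 + int b) M" for M
    using b unfolding Delta_freq_def Delta_count_mult_add[OF b]
    by (cases "M = 0") (simp_all add: Delta_count_def field_simps)
  have lim_B': "(\<lambda>M. real r0 / real b * Delta_freq b (r + 1) (d - int r0 + int b) M)
      \<longlonglongrightarrow> real r0 / real b * B"
  proof (cases "r0 = 0")
    case False
    then show ?thesis by (intro tendsto_mult_left lim_B) simp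
  qed simp
  have "(\<lambda>M. real (Delta_count b (b * r + r0) d (b * M)) / real (b * M))
      \<longlonglongrightarrow> real (b - r0) / real b * A + real r0 / real b * B"
    unfolding eq by (rule tendsto_add[OF tendsto_mult_left[OF lim_A] lim_B'])
  then show ?thesis
    unfolding Delta_freq_def using b
    by (intro tendsto_ratio_from_multiples[where b = b] Delta_count_mono Delta_count_add_le) auto
qed

lemma Delta_freq_zero_tendsto: "Delta_freq b 0 d \<longlonglongrightarrow> of_bool (d = 0)"
proof (rule Lim_transform_eventually[OF tendsto_const])
  show "\<forall>\<^sub>F N in sequentially. of_bool (d = 0) = Delta_freq b 0 d N"
    by (intro eventually_sequentiallyI[of 1]) (auto simp: Delta_freq_def Delta_count_def Delta_def)
qed

lemma Delta_one_le:
  assumes b: "b \<ge> 2"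
  shows "Delta b 1 n \<le> 1"
proof (induction n rule: less_induct)
  case (less n)
  have n0: "n mod b < b" using b by simp
  have "Delta b 1 n = Delta b (b * 0 + 1) (b * (n div b) + n mod b)" by simp
  also have "\<dots> = (if n mod b + 1 < b then 1 else Delta b 1 (n div b) + 1 - int b)"
    using Delta_mult_add[OF b n0, of 1 0 "n div b"] b by (simp add: Delta_def)
  also have "\<dots> \<le> 1"
  proof (cases "n mod b + 1 < b")
    case False
    then have "n div b < n" using b by (intro div_less_dividend) (auto intro: Nat.gr0I)
    from less[OF this] show ?thesis using b by simp
  qed simp
  finally show ?case .
qed

text \<open>The law of \<open>Delta b 1\<close>: \<open>Delta b 1 n = 1 - (b - 1) k\<close> where \<open>k\<close> is the number of trailing
  digits \<open>b - 1\<close> of \<open>n\<close>, which happens with density \<open>(b - 1) / b ^ (k + 1)\<close>.\<close>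
definition geom_law :: "nat \<Rightarrow> int \<Rightarrow> real" where
  "geom_law b d = (if d \<le> 1 \<and> (int b - 1) dvd (1 - d)
     then (real b - 1) / real b ^ (nat ((1 - d) div (int b - 1)) + 1) else 0)"

lemma geom_law_rec:
  assumes b: "b \<ge> 2"
  shows "geom_law b d = (real b - 1) / real b * of_bool (d = 1) + geom_law b (d + int b - 1) / real b"
proof -
  define c where "c = int b - 1"
  have c: "c > 0" "d + int b - 1 = d + c" using b by (simp_all add: c_def)
  consider "d \<ge> 1" | "d < 1" "c dvd (1 - d)" | "d < 1" "\<not> c dvd (1 - d)" by linarith
  then show ?thesis
  proof cases
    case 1
    then show ?thesis using c unfolding geom_law_def c_def[symmetric] by auto
  next
    case 2
    then obtain k where k: "1 - d = c * k" by blast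
    have "0 < c * k" using 2 k by linarith
    with c have "k > 0" by (simp add: zero_less_mult_iff)
    have k': "1 - (d + c) = c * (k - 1)" using k by (simp add: algebra_simps)
    have lhs: "geom_law b d = (real b - 1) / real b ^ (nat (k - 1) + 2)"
      using 2 c k \<open>k > 0\<close> unfolding geom_law_def c_def[symmetric]
      by (simp add: nat_diff_distrib')
    have "0 \<le> c * (k - 1)" using c \<open>k > 0\<close> by simp
    then have "d + c \<le> 1" using k' by linarith
    moreover have "c dvd (1 - (d + c))" "(1 - (d + c)) div c = k - 1"
      unfolding k' using c by simp_all
    ultimately have rhs: "geom_law b (d + c) = (real b - 1) / real b ^ (nat (k - 1) + 1)"
      unfolding geom_law_def c_def[symmetric] by simp
    show ?thesis unfolding c(2) lhs rhs using \<open>d < 1\<close> by simp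
  next
    case 3
    have "\<not> c dvd (1 - (d + c))"
    proof
      assume "c dvd (1 - (d + c))"
      from dvd_add[OF this dvd_refl[of c]] show False using 3 by (simp add: algebra_simps)
    qed
    then show ?thesis using 3 unfolding c(2) geom_law_def c_def[symmetric] by simp
  qed
qed

lemma Delta_freq_one_tendsto:
  assumes b: "b \<ge> 2"
  shows "Delta_freq b 1 d \<longlonglongrightarrow> geom_law b d"
proof (induction "nat (2 - d)" arbitrary: d rule: less_induct)
  case less
  show ?case
  proof (cases "d > 1")
    case True
    then have "Delta b 1 n \<noteq> d" for n using Delta_one_le[OF b, of n] by simp
    then have "Delta_freq b 1 d = (\<lambda>_. 0)" by (intro ext) (simp add: Delta_freq_def Delta_count_def)
    moreover have "geom_law b d = 0" using True by (simp add: geom_law_def)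
    ultimately show ?thesis by simp
  next
    case False
    have "nat (2 - (d - 1 + int b)) < nat (2 - d)" using False b by simp
    then have IH: "Delta_freq b 1 (d - 1 + int b) \<longlonglongrightarrow> geom_law b (d - 1 + int b)" by (rule less)
    have "Delta_freq b (b * 0 + 1) d \<longlonglongrightarrow>
        real (b - 1) / real b * of_bool (d - int 1 = 0) + real 1 / real b * geom_law b (d - 1 + int b)"
      by (rule Delta_freq_mult_add_tendsto[OF b _ Delta_freq_zero_tendsto]) (use b IH in simp_all)
    moreover have "real (b - 1) / real b * of_bool (d - int 1 = 0) + real 1 / real b * geom_law b (d - 1 + int b)
        = geom_law b d"
      using geom_law_rec[OF b, of d] b by (simp add: of_nat_diff algebra_simps)
    ultimately show ?thesis by simp
  qed
qed

lemma summable_square_over_two_pow: "summable (\<lambda>k::nat. (real k + 1)\<^sup>2 / 2 ^ k)"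
proof (rule summable_ratio_test[where c = "8/9" and N = 2])
  fix n :: nat assume "n \<ge> 2"
  then have "(3 * (real n + 2))\<^sup>2 \<le> (4 * (real n + 1))\<^sup>2" by (intro power_mono) auto
  then have "9 * (real n + 2)\<^sup>2 \<le> 16 * (real n + 1)\<^sup>2" by (simp add: power2_eq_square algebra_simps)
  then show "norm ((real (Suc n) + 1)\<^sup>2 / 2 ^ Suc n) \<le> 8/9 * norm ((real n + 1)\<^sup>2 / 2 ^ n)"
    by (simp add: field_simps)
qed simp

lemma geom_law_moment_summable:
  assumes b: "b \<ge> 2" and j: "j \<le> 2"
  shows "(\<lambda>d. real_of_int d ^ j * geom_law b d) summable_on UNIV"
proof -
  define g where "g k = 1 - int k * (int b - 1)" for k
  let ?f = "\<lambda>d. real_of_int d ^ j * geom_law b d"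
  have "inj g" using b unfolding g_def inj_on_def by auto
  have geom_law_g: "geom_law b (g k) = (real b - 1) / real b ^ (k + 1)" for k
    using b unfolding geom_law_def g_def by simp
  have support: "d \<in> range g" if "geom_law b d \<noteq> 0" for d
  proof -
    from that have "d \<le> 1" "(int b - 1) dvd (1 - d)" unfolding geom_law_def by (auto split: if_splits)
    then obtain q where q: "1 - d = (int b - 1) * q" by blast
    with \<open>d \<le> 1\<close> have "0 \<le> (int b - 1) * q" by simp
    with b have "q \<ge> 0" by (simp add: zero_le_mult_iff)
    with q have "d = g (nat q)" unfolding g_def by (simp add: algebra_simps)
    then show ?thesis by simp
  qed
  have bound: "norm (?f (g k)) \<le> (real b)\<^sup>2 * ((real k + 1)\<^sup>2 / 2 ^ k)" for k
  proof -
    have "real_of_int (g k) = 1 - real k * real b + real k" unfolding g_def by (simp add: algebra_simps)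
    moreover have "real k \<le> real k * real b" using b by (simp add: mult_le_cancel_left1)
    ultimately have "\<bar>real_of_int (g k)\<bar> \<le> (real k + 1) * real b"
      using b by (simp add: abs_le_iff algebra_simps)
    moreover have "1 \<le> (real k + 1) * real b"
      using b mult_mono[of 1 "real k + 1" 1 "real b"] by simp
    ultimately have "\<bar>real_of_int (g k)\<bar> ^ j \<le> ((real k + 1) * real b)\<^sup>2"
      using j by (meson order.trans power_increasing power_mono abs_ge_zero)
    moreover have "(real b - 1) / real b ^ (k + 1) \<le> 1 / 2 ^ k"
    proof -
      have "(real b - 1) / real b ^ (k + 1) \<le> 1 / real b ^ k" using b by (simp add: field_simps)
      also have "\<dots> \<le> 1 / 2 ^ k" using b by (intro divide_left_mono power_mono) auto
      finally show ?thesis .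
    qed
    moreover have "0 \<le> (real b - 1) / real b ^ (k + 1)" using b by simp
    ultimately have "\<bar>real_of_int (g k)\<bar> ^ j * ((real b - 1) / real b ^ (k + 1))
        \<le> ((real k + 1) * real b)\<^sup>2 * (1 / 2 ^ k)"
      by (intro mult_mono) auto
    then show ?thesis using b by (simp add: geom_law_g abs_mult power_abs power_mult_distrib mult.commute)
  qed
  have "summable (\<lambda>k. norm (?f (g k)))"
    by (rule summable_comparison_test'[OF summable_mult[OF summable_square_over_two_pow]])
      (use bound in auto)
  then have "(?f \<circ> g) summable_on UNIV" by (simp add: norm_summable_imp_summable_on o_def)
  then have "?f summable_on range g" using summable_on_reindex[OF \<open>inj g\<close>] by blast
  then show ?thesis
    by (rule summable_on_cong_neutral[THEN iffD1, rotated -1]) (use support in auto)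
qed

lemma has_sum_shift_int:
  fixes f :: "int \<Rightarrow> real"
  assumes "(f has_sum s) UNIV"
  shows "((\<lambda>d. f (d - c)) has_sum s) UNIV"
proof -
  have "bij_betw (\<lambda>d. d - c) UNIV UNIV"
    by (rule bij_betwI[where g = "\<lambda>d. d + c"]) auto
  then show ?thesis using assms by (simp only: has_sum_reindex_bij_betw[of "\<lambda>d. d - c" UNIV UNIV f])
qed

lemma has_sum_shift_moments:
  fixes A :: "int \<Rightarrow> real"
  assumes h0: "(A has_sum m0) UNIV" and h1: "((\<lambda>d. of_int d * A d) has_sum m1) UNIV"
    and h2: "((\<lambda>d. (of_int d)\<^sup>2 * A d) has_sum m2) UNIV"
  shows "((\<lambda>d. A (d - c)) has_sum m0) UNIV"
    and "((\<lambda>d. of_int d * A (d - c)) has_sum (m1 + of_int c * m0)) UNIV"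
    and "((\<lambda>d. (of_int d)\<^sup>2 * A (d - c)) has_sum (m2 + 2 * of_int c * m1 + (of_int c)\<^sup>2 * m0)) UNIV"
proof -
  show "((\<lambda>d. A (d - c)) has_sum m0) UNIV" by (rule has_sum_shift_int[OF h0])
  have "((\<lambda>d. of_int d * A d + of_int c * A d) has_sum (m1 + of_int c * m0)) UNIV"
    by (intro has_sum_add h1 has_sum_cmult_right h0)
  from has_sum_shift_int[OF this, of c]
  show "((\<lambda>d. of_int d * A (d - c)) has_sum (m1 + of_int c * m0)) UNIV"
    by (simp add: algebra_simps)
  have "((\<lambda>d. (of_int d)\<^sup>2 * A d + (2 * of_int c * (of_int d * A d) + (of_int c)\<^sup>2 * A d))
      has_sum (m2 + (2 * of_int c * m1 + (of_int c)\<^sup>2 * m0))) UNIV"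
    by (intro has_sum_add h2 has_sum_cmult_right h1 h0)
  from has_sum_shift_int[OF this, of c]
  show "((\<lambda>d. (of_int d)\<^sup>2 * A (d - c)) has_sum (m2 + 2 * of_int c * m1 + (of_int c)\<^sup>2 * m0)) UNIV"
    by (simp add: algebra_simps power2_eq_square)
qed

lemma has_sum_shifted_mixture_moments:
  fixes A B :: "int \<Rightarrow> real" and a c :: int
  assumes A: "(A has_sum 1) UNIV" "((\<lambda>d. of_int d * A d) has_sum 0) UNIV"
      "((\<lambda>d. (of_int d)\<^sup>2 * A d) has_sum VA) UNIV"
    and B: "(B has_sum 1) UNIV" "((\<lambda>d. of_int d * B d) has_sum 0) UNIV"
      "((\<lambda>d. (of_int d)\<^sup>2 * B d) has_sum VB) UNIV"
    and weights: "p + q = 1" "p * of_int a + q * of_int c = 0"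
  defines "M \<equiv> \<lambda>d. p * A (d - a) + q * B (d - c)"
  shows "(M has_sum 1) UNIV"
    and "((\<lambda>d. of_int d * M d) has_sum 0) UNIV"
    and "((\<lambda>d. (of_int d)\<^sup>2 * M d) has_sum (p * VA + q * VB + p * (of_int a)\<^sup>2 + q * (of_int c)\<^sup>2)) UNIV"
proof -
  note sA = has_sum_shift_moments[OF A, of a] and sB = has_sum_shift_moments[OF B, of c]
  have "(M has_sum (p * 1 + q * 1)) UNIV"
    unfolding M_def by (intro has_sum_add has_sum_cmult_right sA(1) sB(1))
  then show "(M has_sum 1) UNIV" using weights by simp
  have "((\<lambda>d. p * (of_int d * A (d - a)) + q * (of_int d * B (d - c)))
      has_sum (p * (0 + of_int a * 1) + q * (0 + of_int c * 1))) UNIV"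
    by (intro has_sum_add has_sum_cmult_right sA(2) sB(2))
  then show "((\<lambda>d. of_int d * M d) has_sum 0) UNIV"
    using weights unfolding M_def by (simp add: algebra_simps)
  have "((\<lambda>d. p * ((of_int d)\<^sup>2 * A (d - a)) + q * ((of_int d)\<^sup>2 * B (d - c)))
      has_sum (p * (VA + 2 * of_int a * 0 + (of_int a)\<^sup>2 * 1) + q * (VB + 2 * of_int c * 0 + (of_int c)\<^sup>2 * 1))) UNIV"
    by (intro has_sum_add has_sum_cmult_right sA(3) sB(3))
  then show "((\<lambda>d. (of_int d)\<^sup>2 * M d) has_sum (p * VA + q * VB + p * (of_int a)\<^sup>2 + q * (of_int c)\<^sup>2)) UNIV"
    unfolding M_def by (simp add: algebra_simps)
qed

definition centred_limit_law :: "nat \<Rightarrow> nat \<Rightarrow> bool" where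
  "centred_limit_law b r \<longleftrightarrow> (\<forall>d. Delta_freq b r d \<longlonglongrightarrow> mu b r d)
     \<and> (mu b r has_sum 1) UNIV
     \<and> ((\<lambda>d. of_int d * mu b r d) has_sum 0) UNIV
     \<and> ((\<lambda>d. (of_int d)\<^sup>2 * mu b r d) has_sum Var_mu b r) UNIV"

lemma Var_mu_eqI:
  assumes "((\<lambda>d. of_int d * mu b r d) has_sum 0) UNIV"
    and "((\<lambda>d. (of_int d)\<^sup>2 * mu b r d) has_sum V) UNIV"
  shows "Var_mu b r = V"
proof -
  have "mean_mu b r = 0" unfolding mean_mu_def using assms(1) by (rule infsumI)
  then show ?thesis unfolding Var_mu_def using assms(2) by (simp add: infsumI)
qed

lemma centred_limit_law_intro:
  assumes "\<And>d. Delta_freq b r d \<longlonglongrightarrow> L d"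
    and "(L has_sum 1) UNIV" "((\<lambda>d. of_int d * L d) has_sum 0) UNIV"
    and "((\<lambda>d. (of_int d)\<^sup>2 * L d) has_sum V) UNIV"
  shows "centred_limit_law b r" and "Var_mu b r = V"
proof -
  have "mu b r = L" using assms(1) by (intro ext mu_eqI)
  then show "Var_mu b r = V" using assms(3,4) by (simp add: Var_mu_eqI)
  with \<open>mu b r = L\<close> show "centred_limit_law b r"
    using assms unfolding centred_limit_law_def by simp
qed

lemma has_sum_indicator: "((\<lambda>d::int. x * of_bool (d = a)) has_sum (x::real)) UNIV"
proof -
  have "((\<lambda>d::int. x * of_bool (d = a)) has_sum (\<Sum>d\<in>{a}. x * of_bool (d = a))) {a}"
    by (rule has_sum_finite) simp
  then have "((\<lambda>d::int. x * of_bool (d = a)) has_sum x) {a}" by simp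
  then show ?thesis by (rule has_sum_cong_neutral[THEN iffD1, rotated -1]) auto
qed

lemma centred_limit_law_zero: "centred_limit_law b 0"
proof -
  have vanish: "(\<lambda>d. real_of_int d * of_bool (d = 0)) = (\<lambda>_. 0)"
    "(\<lambda>d. (real_of_int d)\<^sup>2 * of_bool (d = 0)) = (\<lambda>_. 0)"
    by auto
  show ?thesis
    using has_sum_indicator[of 1 0]
    by (intro centred_limit_law_intro[OF Delta_freq_zero_tendsto, where V = 0]) (simp_all only: vanish, simp_all)
qed

lemma centred_limit_law_one:
  assumes b: "b \<ge> 2"
  shows "centred_limit_law b 1"
proof -
  define m0 m1 m2 where "m0 = infsum (geom_law b) UNIV"
    and "m1 = infsum (\<lambda>d. of_int d * geom_law b d) UNIV"
    and "m2 = infsum (\<lambda>d. (of_int d)\<^sup>2 * geom_law b d) UNIV"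
  have h0: "(geom_law b has_sum m0) UNIV"
    and h1: "((\<lambda>d. of_int d * geom_law b d) has_sum m1) UNIV"
    and h2: "((\<lambda>d. (of_int d)\<^sup>2 * geom_law b d) has_sum m2) UNIV"
    unfolding m0_def m1_def m2_def using geom_law_moment_summable[OF b, of 0] geom_law_moment_summable[OF b, of 1]
      geom_law_moment_summable[OF b, of 2] by simp_all
  define c where "c = 1 - int b"
  have law_rec: "geom_law b d = (real b - 1) / real b * of_bool (d = 1) + 1 / real b * geom_law b (d - c)" for d
    using geom_law_rec[OF b, of d] by (simp add: c_def algebra_simps)
  note shifted = has_sum_shift_moments[OF h0 h1 h2, of c]
  define p where "p = (real b - 1) / real b"
  have "((\<lambda>d. p * of_bool (d = 1) + 1 / real b * geom_law b (d - c)) has_sum (p + 1 / real b * m0)) UNIV"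
    by (intro has_sum_add has_sum_indicator has_sum_cmult_right shifted(1))
  moreover have "p * of_bool (d = 1) + 1 / real b * geom_law b (d - c) = geom_law b d" for d
    using law_rec[of d] by (simp add: p_def)
  ultimately have "m0 = p + 1 / real b * m0" using h0 by (simp add: has_sum_unique)
  then have "(m0 - 1) * (real b - 1) = 0" using b unfolding p_def by (simp add: field_simps)
  then have M0: "m0 = 1" using b by simp
  have "((\<lambda>d. p * of_bool (d = 1) + 1 / real b * (of_int d * geom_law b (d - c)))
      has_sum (p + 1 / real b * (m1 + of_int c * m0))) UNIV"
    by (intro has_sum_add has_sum_indicator has_sum_cmult_right shifted(2))
  moreover have "p * of_bool (d = 1) + 1 / real b * (of_int d * geom_law b (d - c)) = of_int d * geom_law b d" for d
    using law_rec[of d] by (auto simp: p_def algebra_simps)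
  ultimately have "m1 = p + 1 / real b * (m1 + of_int c * m0)" using h1 by (simp add: has_sum_unique)
  then have M1: "m1 = 0" using b M0 unfolding p_def c_def by (simp add: field_simps)
  show ?thesis
    using h0 h1 h2 unfolding M0 M1 by (intro centred_limit_law_intro[OF Delta_freq_one_tendsto[OF b]])
qed

lemma centred_limit_law_mult_add:
  assumes b: "b \<ge> 2" "r0 < b"
    and law_r: "centred_limit_law b r" and law_r1: "0 < r0 \<Longrightarrow> centred_limit_law b (r + 1)"
  shows "centred_limit_law b (b * r + r0)"
    and "Var_mu b (b * r + r0) = real (b - r0) / real b * Var_mu b r
           + real r0 / real b * Var_mu b (r + 1) + real r0 * real (b - r0)"
proof -
  define p q where "p = real (b - r0) / real b" and "q = real r0 / real b"
  text \<open>The second component has weight \<open>q\<close>, so for \<open>r0 = 0\<close> any law may stand in for it.\<close>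
  define s where "s = (if r0 = 0 then r else r + 1)"
  have law_s: "centred_limit_law b s" using law_r law_r1 by (simp add: s_def)
  have q_Var: "q * Var_mu b s = q * Var_mu b (r + 1)" by (simp add: q_def s_def)
  have lim: "Delta_freq b (b * r + r0) d \<longlonglongrightarrow> p * mu b r (d - int r0) + q * mu b s (d - (int r0 - int b))" for d
    unfolding p_def q_def using law_r law_s
    by (intro Delta_freq_mult_add_tendsto[OF b]) (auto simp: centred_limit_law_def s_def algebra_simps)
  have weights: "p + q = 1" "p * of_int (int r0) + q * of_int (int r0 - int b) = 0"
    using b by (simp_all add: p_def q_def of_nat_diff field_simps)
  have variance: "p * Var_mu b r + q * Var_mu b s + p * (of_int (int r0))\<^sup>2 + q * (of_int (int r0 - int b))\<^sup>2
      = real (b - r0) / real b * Var_mu b r + real r0 / real b * Var_mu b (r + 1) + real r0 * real (b - r0)"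
    using b unfolding q_Var by (simp add: p_def q_def of_nat_diff field_simps power2_eq_square)
  have A: "(mu b r has_sum 1) UNIV" "((\<lambda>d. of_int d * mu b r d) has_sum 0) UNIV"
      "((\<lambda>d. (of_int d)\<^sup>2 * mu b r d) has_sum Var_mu b r) UNIV"
    and B: "(mu b s has_sum 1) UNIV" "((\<lambda>d. of_int d * mu b s d) has_sum 0) UNIV"
      "((\<lambda>d. (of_int d)\<^sup>2 * mu b s d) has_sum Var_mu b s) UNIV"
    using law_r law_s unfolding centred_limit_law_def by auto
  note moments = has_sum_shifted_mixture_moments[OF A B weights]
  show "centred_limit_law b (b * r + r0)"
    and "Var_mu b (b * r + r0) = real (b - r0) / real b * Var_mu b r
           + real r0 / real b * Var_mu b (r + 1) + real r0 * real (b - r0)"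
    using centred_limit_law_intro[OF lim moments(1,2) moments(3)[unfolded variance]] by simp_all
qed

lemma centred_limit_law_all:
  assumes b: "b \<ge> 2"
  shows "centred_limit_law b r"
proof (induction r rule: less_induct)
  case (less r)
  consider "r = 0" | "r = 1" | "r \<ge> 2" by linarith
  then show ?case
  proof cases
    case 3
    define rt r0 where "rt = r div b" and "r0 = r mod b"
    have r: "r = b * rt + r0" and "r0 < b" using b by (simp_all add: rt_def r0_def)
    have "rt < r" using b 3 by (simp add: rt_def)
    moreover have "rt + 1 < r" if "0 < r0"
    proof (cases "rt = 0")
      case False
      have "2 * rt \<le> b * rt" using b by simp
      then show ?thesis using r False that by linarith
    qed (use r 3 in simp)
    ultimately show ?thesis
      using centred_limit_law_mult_add(1)[OF b \<open>r0 < b\<close> less less] r by simp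
  qed (use b centred_limit_law_zero centred_limit_law_one in simp_all)
qed

theorem mainTheorem10:
  fixes b rt r0 :: nat
  assumes "b \<ge> 2" and "r0 < b"
  shows "Var_mu b (b * rt + r0) =
           real (b - r0) / real b * Var_mu b rt
         + real r0 / real b * Var_mu b (rt + 1)
         + real r0 * real (b - r0)"
  using assms by (intro centred_limit_law_mult_add(2) centred_limit_law_all)

end
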